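(* Let $S$ be a finite non-abelian simple group and let $p$ be a prime with $\gcd(|S|,p)=1$. Then $S\times\mathbb{Z}_p$ is $\psi$-normal divisible. In particular, for every prime $p$ with $\gcd(60,p)=1$, the group $A_5\times\mathbb{Z}_p$ is $\psi$-normal divisible.
   Context: For a finite group $G$, $\psi(G)=\sum_{x\in G} o(x)$ denotes the sum of the orders of all elements of $G$. A finite group $G$ is called $\psi$-normal divisible if $\psi(H)$ divides $\psi(G)$ for every normal subgroup $H$ of $G$. *)

theory Defs
  imports "HOL-Algebra.Algebra"
begin

definition psi :: "('a, 'b) monoid_scheme \<Rightarrow> nat" where
  "psi G = (\<Sum>x\<in>carrier G. group.ord G x)"

definition psi_normal_divisible :: "('a, 'b) monoid_scheme \<Rightarrow> bool" where
  "psi_normal_divisible G \<longleftrightarrow>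
     (\<forall>H. H \<lhd> G \<longrightarrow> psi (G\<lparr>carrier := H\<rparr>) dvd psi G)"

end

theory Submission
  imports Defs "HOL-Combinatorics.Multiset_Permutations"
begin

text \<open>For finite groups \<open>G\<close> and \<open>H\<close> of coprime order, the order of \<open>(a, b)\<close> is
  \<open>ord a \<cdot> ord b\<close>, and every normal subgroup of \<open>G \<times> H\<close> is a product \<open>A \<times> B\<close> of normal
  subgroups, because raising to the power \<open>|H|\<close> kills the second coordinate and acts invertibly
  on the first. So the sum of element orders over a normal subgroup factors, and
  \<open>\<psi>\<close>-normal divisibility passes from \<open>G\<close> and \<open>H\<close> to \<open>G \<times> H\<close>; simple groups, in particular
  \<open>\<int>\<^sub>p\<close>, have it trivially. For \<open>A\<^sub>5 \<times> \<int>\<^sub>p\<close> it remains to see that \<open>A\<^sub>5\<close> is simple: a nontrivial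
  normal subgroup contains a 3-cycle and hence, all 3-cycles being conjugate in \<open>A\<^sub>5\<close>, every
  3-cycle; these generate \<open>A\<^sub>5\<close>.\<close>

lemma ord_subgroup_restrict:
  assumes "group G" and "subgroup H G"
  shows "group.ord (G\<lparr>carrier := H\<rparr>) x = group.ord G x"
proof -
  have "group (G\<lparr>carrier := H\<rparr>)"
    using assms by (rule group.subgroup_imp_group)
  then show ?thesis
    unfolding group.ord_def[OF assms(1)] group.ord_def[OF \<open>group (G\<lparr>carrier := H\<rparr>)\<close>]
    by (simp add: nat_pow_def)
qed

lemma psi_subgroup:
  assumes "group G" and "subgroup H G"
  shows "psi (G\<lparr>carrier := H\<rparr>) = (\<Sum>x\<in>H. group.ord G x)"
  by (simp add: psi_def ord_subgroup_restrict[OF assms])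

lemma psi_normal_divisible_iff_sum_ord:
  assumes "group G"
  shows "psi_normal_divisible G \<longleftrightarrow> (\<forall>N. N \<lhd> G \<longrightarrow> (\<Sum>x\<in>N. group.ord G x) dvd psi G)"
  using psi_subgroup[OF assms] normal_imp_subgroup
  unfolding psi_normal_divisible_def by metis

lemma simple_group_psi_normal_divisible:
  assumes "simple_group G"
  shows "psi_normal_divisible G"
proof -
  interpret simple_group G by fact
  have "(\<Sum>x\<in>N. ord x) dvd psi G" if "N \<lhd> G" for N
    using no_real_normal_subgroup[OF that] by (auto simp: psi_def)
  then show ?thesis
    using psi_normal_divisible_iff_sum_ord[OF is_group] by blast
qed

lemma nat_pow_DirProd:
  "(a, b) [^]\<^bsub>G \<times>\<times> H\<^esub> (n::nat) = (a [^]\<^bsub>G\<^esub> n, b [^]\<^bsub>H\<^esub> n)"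
  by (induction n) simp_all

lemma ord_DirProd_coprime:
  assumes "group G" and "group H" and a: "a \<in> carrier G" and b: "b \<in> carrier H"
    and coprime: "coprime (group.ord G a) (group.ord H b)"
  shows "group.ord (G \<times>\<times> H) (a, b) = group.ord G a * group.ord H b"
proof -
  interpret G: group G by fact
  interpret H: group H by fact
  interpret GH: group "G \<times>\<times> H" using DirProd_group[OF assms(1,2)] .
  have "(a, b) [^]\<^bsub>G \<times>\<times> H\<^esub> n = \<one>\<^bsub>G \<times>\<times> H\<^esub> \<longleftrightarrow> G.ord a * H.ord b dvd n" for n :: nat
  proof -
    have "(a, b) [^]\<^bsub>G \<times>\<times> H\<^esub> n = \<one>\<^bsub>G \<times>\<times> H\<^esub> \<longleftrightarrow> G.ord a dvd n \<and> H.ord b dvd n"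
      using G.pow_eq_id[OF a] H.pow_eq_id[OF b] by (simp add: nat_pow_DirProd)
    also have "\<dots> \<longleftrightarrow> G.ord a * H.ord b dvd n"
      using coprime by (meson divides_mult dvd_mult_left dvd_mult_right)
    finally show ?thesis .
  qed
  then show ?thesis
    using GH.ord_unique a b by simp
qed

lemma (in group) pow_coprime_order_invertible:
  assumes "coprime e (order G)" and "e \<noteq> 0"
  obtains k :: nat where "\<And>x. x \<in> carrier G \<Longrightarrow> (x [^] e) [^] k = x"
proof -
  obtain k m :: nat where "e * k = order G * m + gcd e (order G)"
    using bezout_nat[OF assms(2)] by blast
  then have k: "e * k = order G * m + 1"
    using assms(1) by simp
  have "(x [^] e) [^] k = x" if x: "x \<in> carrier G" for x
  proof -
    have "(x [^] e) [^] k = (x [^] order G) [^] m \<otimes> x"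
      using x by (simp add: nat_pow_pow k nat_pow_mult)
    also have "\<dots> = x"
      using x by (simp add: pow_order_eq_1)
    finally show ?thesis .
  qed
  then show ?thesis using that by blast
qed

lemma normal_vimage_hom:
  assumes "group G" and "group K" and h: "h \<in> hom G K" and N: "N \<lhd> K"
  shows "{x \<in> carrier G. h x \<in> N} \<lhd> G"
proof -
  interpret G: group G by fact
  interpret h: group_hom G K h
    using assms by (simp add: group_hom_def group_hom_axioms_def)
  interpret N: normal N K by fact
  show ?thesis
    unfolding G.normal_inv_iff
  proof (intro conjI ballI)
    show "subgroup {x \<in> carrier G. h x \<in> N} G"
      by (rule G.subgroupI) (auto simp: N.m_inv_closed N.m_closed)
    show "x \<otimes>\<^bsub>G\<^esub> y \<otimes>\<^bsub>G\<^esub> inv\<^bsub>G\<^esub> x \<in> {x \<in> carrier G. h x \<in> N}"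
      if "x \<in> carrier G" and "y \<in> {x \<in> carrier G. h x \<in> N}" for x y
      using that N.inv_op_closed2 by auto
  qed
qed

lemma DirProd_inl_hom:
  assumes "group H"
  shows "(\<lambda>a. (a, \<one>\<^bsub>H\<^esub>)) \<in> hom G (G \<times>\<times> H)"
  using assms by (intro homI) (auto simp: group.is_monoid)

lemma DirProd_inr_hom:
  assumes "group G"
  shows "(\<lambda>b. (\<one>\<^bsub>G\<^esub>, b)) \<in> hom H (G \<times>\<times> H)"
  using assms by (intro homI) (auto simp: group.is_monoid)

lemma normal_DirProd_coprime_mem_iff:
  assumes "group G" and "group H" and "finite (carrier G)" and "finite (carrier H)"
    and coprime: "coprime (order G) (order H)" and N: "N \<lhd> G \<times>\<times> H"
    and a: "a \<in> carrier G" and b: "b \<in> carrier H"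
  shows "(a, b) \<in> N \<longleftrightarrow> (a, \<one>\<^bsub>H\<^esub>) \<in> N \<and> (\<one>\<^bsub>G\<^esub>, b) \<in> N"
proof
  interpret G: group G by fact
  interpret H: group H by fact
  interpret GH: group "G \<times>\<times> H" using DirProd_group[OF assms(1,2)] .
  interpret N: normal N "G \<times>\<times> H" by fact
  have pow_closed: "x [^]\<^bsub>G \<times>\<times> H\<^esub> n \<in> N" if "x \<in> N" for x and n :: nat
    using GH.subgroup_int_pow_closed[OF N.subgroup_axioms that, of "int n"] by (simp add: int_pow_int)
  have "order G \<noteq> 0" "order H \<noteq> 0"
    using G.order_gt_0_iff_finite H.order_gt_0_iff_finite assms(3,4) by simp_all
  moreover have "coprime (order H) (order G)"
    using coprime by (simp add: coprime_commute)
  ultimately obtain k j :: nat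
    where k: "(a [^]\<^bsub>G\<^esub> order H) [^]\<^bsub>G\<^esub> k = a" and j: "(b [^]\<^bsub>H\<^esub> order G) [^]\<^bsub>H\<^esub> j = b"
    using G.pow_coprime_order_invertible H.pow_coprime_order_invertible[OF coprime] a b by metis
  assume ab: "(a, b) \<in> N"
  have "b [^]\<^bsub>H\<^esub> order H = \<one>\<^bsub>H\<^esub>" and "a [^]\<^bsub>G\<^esub> order G = \<one>\<^bsub>G\<^esub>"
    using H.pow_order_eq_1[OF b] G.pow_order_eq_1[OF a] .
  then have "((a, b) [^]\<^bsub>G \<times>\<times> H\<^esub> order H) [^]\<^bsub>G \<times>\<times> H\<^esub> k = (a, \<one>\<^bsub>H\<^esub>)"
    and "((a, b) [^]\<^bsub>G \<times>\<times> H\<^esub> order G) [^]\<^bsub>G \<times>\<times> H\<^esub> j = (\<one>\<^bsub>G\<^esub>, b)"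
    by (simp_all only: nat_pow_DirProd k j G.nat_pow_one H.nat_pow_one)
  then show "(a, \<one>\<^bsub>H\<^esub>) \<in> N \<and> (\<one>\<^bsub>G\<^esub>, b) \<in> N"
    using ab pow_closed by metis
next
  assume "(a, \<one>\<^bsub>H\<^esub>) \<in> N \<and> (\<one>\<^bsub>G\<^esub>, b) \<in> N"
  then have "(a, \<one>\<^bsub>H\<^esub>) \<otimes>\<^bsub>G \<times>\<times> H\<^esub> (\<one>\<^bsub>G\<^esub>, b) \<in> N"
    using N by (blast intro: normal_imp_subgroup subgroup.m_closed)
  then show "(a, b) \<in> N"
    using a b assms(1,2) by (simp add: group.is_monoid)
qed

lemma normal_DirProd_coprime_eq_Times:
  assumes "group G" and "group H" and "finite (carrier G)" and "finite (carrier H)"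
    and "coprime (order G) (order H)" and N: "N \<lhd> G \<times>\<times> H"
  shows "N = {a \<in> carrier G. (a, \<one>\<^bsub>H\<^esub>) \<in> N} \<times> {b \<in> carrier H. (\<one>\<^bsub>G\<^esub>, b) \<in> N}"
proof (intro equalityI subsetI)
  fix x assume "x \<in> N"
  then have "x \<in> carrier G \<times> carrier H"
    using N normal_imp_subgroup subgroup.subset by fastforce
  then obtain a b where "x = (a, b)" "a \<in> carrier G" "b \<in> carrier H"
    by blast
  with \<open>x \<in> N\<close> show "x \<in> {a \<in> carrier G. (a, \<one>\<^bsub>H\<^esub>) \<in> N} \<times> {b \<in> carrier H. (\<one>\<^bsub>G\<^esub>, b) \<in> N}"
    using normal_DirProd_coprime_mem_iff[OF assms] by blast
next
  fix x assume "x \<in> {a \<in> carrier G. (a, \<one>\<^bsub>H\<^esub>) \<in> N} \<times> {b \<in> carrier H. (\<one>\<^bsub>G\<^esub>, b) \<in> N}"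
  then show "x \<in> N"
    using normal_DirProd_coprime_mem_iff[OF assms] by blast
qed

lemma sum_ord_DirProd_coprime:
  assumes "group G" and "group H" and coprime: "coprime (order G) (order H)"
    and "A \<subseteq> carrier G" and "B \<subseteq> carrier H"
  shows "(\<Sum>x\<in>A \<times> B. group.ord (G \<times>\<times> H) x) = (\<Sum>a\<in>A. group.ord G a) * (\<Sum>b\<in>B. group.ord H b)"
proof -
  have ord_pair: "group.ord (G \<times>\<times> H) (a, b) = group.ord G a * group.ord H b"
    if "a \<in> A" "b \<in> B" for a b
  proof (rule ord_DirProd_coprime[OF assms(1,2)])
    show a: "a \<in> carrier G" and b: "b \<in> carrier H"
      using that assms(4,5) by auto
    show "coprime (group.ord G a) (group.ord H b)"
      using coprime_divisors[OF group.ord_dvd_group_order[OF assms(1) a]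
          group.ord_dvd_group_order[OF assms(2) b] coprime] .
  qed
  have "(\<Sum>x\<in>A \<times> B. group.ord (G \<times>\<times> H) x) = (\<Sum>(a, b)\<in>A \<times> B. group.ord G a * group.ord H b)"
    by (rule sum.cong) (auto simp: ord_pair)
  also have "\<dots> = (\<Sum>a\<in>A. \<Sum>b\<in>B. group.ord G a * group.ord H b)"
    by (rule sum.cartesian_product[symmetric])
  also have "\<dots> = (\<Sum>a\<in>A. group.ord G a) * (\<Sum>b\<in>B. group.ord H b)"
    by (rule sum_product[symmetric])
  finally show ?thesis .
qed

theorem psi_normal_divisible_DirProd_coprime:
  assumes G: "group G" and H: "group H" and "finite (carrier G)" and "finite (carrier H)"
    and coprime: "coprime (order G) (order H)"
    and div_G: "psi_normal_divisible G" and div_H: "psi_normal_divisible H"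
  shows "psi_normal_divisible (G \<times>\<times> H)"
proof -
  have GH: "group (G \<times>\<times> H)"
    using DirProd_group[OF G H] .
  have "(\<Sum>x\<in>N. group.ord (G \<times>\<times> H) x) dvd psi (G \<times>\<times> H)" if N: "N \<lhd> G \<times>\<times> H" for N
  proof -
    define A where "A = {a \<in> carrier G. (a, \<one>\<^bsub>H\<^esub>) \<in> N}"
    define B where "B = {b \<in> carrier H. (\<one>\<^bsub>G\<^esub>, b) \<in> N}"
    have "A \<lhd> G"
      unfolding A_def using normal_vimage_hom[OF G GH DirProd_inl_hom[OF H] N] by simp
    then have div_A: "(\<Sum>a\<in>A. group.ord G a) dvd psi G"
      using div_G psi_normal_divisible_iff_sum_ord[OF G] by blast
    have "B \<lhd> H"
      unfolding B_def using normal_vimage_hom[OF H GH DirProd_inr_hom[OF G] N] by simp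
    then have div_B: "(\<Sum>b\<in>B. group.ord H b) dvd psi H"
      using div_H psi_normal_divisible_iff_sum_ord[OF H] by blast
    have "(\<Sum>x\<in>N. group.ord (G \<times>\<times> H) x) = (\<Sum>x\<in>A \<times> B. group.ord (G \<times>\<times> H) x)"
      unfolding A_def B_def using normal_DirProd_coprime_eq_Times[OF G H assms(3,4) coprime N] by simp
    also have "\<dots> = (\<Sum>a\<in>A. group.ord G a) * (\<Sum>b\<in>B. group.ord H b)"
      by (rule sum_ord_DirProd_coprime[OF G H coprime]) (auto simp: A_def B_def)
    also have "\<dots> dvd psi G * psi H"
      using div_A div_B by (rule mult_dvd_mono)
    also have "psi G * psi H = psi (G \<times>\<times> H)"
      unfolding psi_def carrier_DirProd
      by (rule sum_ord_DirProd_coprime[OF G H coprime subset_refl subset_refl, symmetric])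
    finally show ?thesis .
  qed
  then show ?thesis
    using psi_normal_divisible_iff_sum_ord[OF GH] by blast
qed

text \<open>Permutations of \<open>{1..n}\<close> are encoded by their lists of images \<open>[p 1, \<dots>, p n]\<close>, so that
  statements about all permutations of \<open>{1..5}\<close> can be decided by evaluation.\<close>

definition perm_of_list :: "nat list \<Rightarrow> nat \<Rightarrow> nat" where
  "perm_of_list xs i = (if 0 < i \<and> i \<le> length xs then xs ! (i - 1) else i)"

text \<open>A decidable 3-cycle test: the least moved point \<open>a\<close> determines the only candidate cycle.\<close>

definition three_cycle_list :: "nat list \<Rightarrow> bool" where
  "three_cycle_list xs \<longleftrightarrow>
     (case find (\<lambda>i. perm_of_list xs i \<noteq> i) [1..<Suc (length xs)] of
        None \<Rightarrow> False
      | Some a \<Rightarrow> let cs = [a, perm_of_list xs a, perm_of_list xs (perm_of_list xs a)] in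
          distinct cs \<and> xs = map (cycle_of_list cs) [1..<Suc (length xs)])"

definition increasing_triples :: "nat \<Rightarrow> nat list list" where
  "increasing_triples n = [cs\<leftarrow>List.n_lists 3 [1..<Suc n]. sorted_wrt (<) cs]"

lemma perm_of_list_map:
  assumes "p permutes {1..n}"
  shows "perm_of_list (map p [1..<Suc n]) = p"
proof
  fix i
  show "perm_of_list (map p [1..<Suc n]) i = p i"
    using permutes_not_in[OF assms, of i] by (auto simp: perm_of_list_def simp del: upt_Suc)
qed

lemma map_permutes_in_permutations_of_set_list:
  assumes "p permutes {1..n}"
  shows "map p [1..<Suc n] \<in> set (permutations_of_set_list [1..<Suc n])"
proof -
  have "map p [1..<Suc n] \<in> permutations_of_set {1..n}"
    using permutes_image[OF assms] permutes_inj_on[OF assms]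
    by (auto simp: permutations_of_set_def distinct_map atLeastLessThanSuc_atLeastAtMost simp del: upt_Suc)
  then show ?thesis
    using permutations_of_list[of "[1..<Suc n]"] by (simp add: atLeastLessThanSuc_atLeastAtMost del: upt_Suc)
qed

lemma three_cycle_list_imp_three_cycles:
  assumes p: "p permutes {1..n}" and "three_cycle_list (map p [1..<Suc n])"
  shows "p \<in> three_cycles n"
proof -
  have "case find (\<lambda>i. p i \<noteq> i) [1..<Suc n] of None \<Rightarrow> False
      | Some a \<Rightarrow> distinct [a, p a, p (p a)] \<and>
          map p [1..<Suc n] = map (cycle_of_list [a, p a, p (p a)]) [1..<Suc n]"
    using assms(2) unfolding three_cycle_list_def perm_of_list_map[OF p] length_map length_upt
      diff_Suc_1 Let_def .
  then obtain a where "find (\<lambda>i. p i \<noteq> i) [1..<Suc n] = Some a"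
    and cs: "distinct [a, p a, p (p a)]"
    and agree: "map p [1..<Suc n] = map (cycle_of_list [a, p a, p (p a)]) [1..<Suc n]"
    by (auto simp del: upt_Suc split: option.splits)
  then have "a \<in> set [1..<Suc n]"
    by (metis find_Some_iff nth_mem)
  then have a: "a \<in> {1..n}"
    by (simp only: set_upt atLeastLessThanSuc_atLeastAtMost)
  have support: "set [a, p a, p (p a)] \<subseteq> {1..n}"
    using a permutes_in_image[OF p] by auto
  have "p = cycle_of_list [a, p a, p (p a)]"
  proof
    fix i
    show "p i = cycle_of_list [a, p a, p (p a)] i"
    proof (cases "i \<in> {1..n}")
      case True
      then show ?thesis
        using agree by (simp add: map_eq_conv atLeastLessThanSuc_atLeastAtMost del: upt_Suc)
    next
      case False
      then have "i \<notin> set [a, p a, p (p a)]"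
        using support by blast
      then show ?thesis
        using permutes_not_in[OF p False] id_outside_supp by metis
    qed
  qed
  moreover have "length [a, p a, p (p a)] = 3"
    by simp
  ultimately show ?thesis
    using cs support by blast
qed

lemma cycle_of_list_rev3_comp: "cycle_of_list [c, b, a] \<circ> cycle_of_list [a, b, c] = id"
  by (auto simp: fun_eq_iff transpose_def)

lemma inv_cycle_of_list3:
  assumes "length cs = 3"
  shows "inv' (cycle_of_list cs) = cycle_of_list (rev cs)"
proof -
  obtain a b c where "cs = [a, b, c]"
    using stupid_lemma[OF assms] by blast
  then show ?thesis
    using cycle_of_list_rev3_comp[of a b c] cycle_of_list_rev3_comp[of c b a]
    by (simp only: rev.simps append.simps inv_unique_comp)
qed

lemma cycle_of_list3_rotate:
  assumes "distinct [a, b, c]"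
  shows "cycle_of_list [b, c, a] = cycle_of_list [a, b, c]"
  using assms by (auto simp: fun_eq_iff transpose_def)

lemma normal_alt_group_conj:
  assumes N: "N \<lhd> alt_group n" and "x \<in> N" and p: "p \<in> carrier (alt_group n)"
  shows "p \<circ> x \<circ> inv' p \<in> N" and "inv' p \<circ> x \<circ> p \<in> N"
  using normal.inv_op_closed2[OF N p \<open>x \<in> N\<close>] normal.inv_op_closed1[OF N p \<open>x \<in> N\<close>]
  by (simp_all add: alt_group_mult alt_group_inv_equality[OF p])

text \<open>For every permutation \<open>x \<noteq> id\<close> of \<open>{1..5}\<close>, either \<open>x\<close> itself or, for some 3-cycle \<open>c\<close>,
  the element \<open>x \<circ> (c \<circ> x \<circ> c\<inverse>)\<close> of the normal closure of \<open>x\<close> is a 3-cycle.\<close>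

lemma permutations_5_three_cycle_witness:
  "\<forall>xs\<in>set (permutations_of_set_list [1..<6]). xs \<noteq> [1..<6] \<longrightarrow>
     three_cycle_list xs \<or>
     (\<exists>cs\<in>set (increasing_triples 5).
        three_cycle_list
          (map (perm_of_list xs \<circ> cycle_of_list cs \<circ> perm_of_list xs \<circ> cycle_of_list (rev cs)) [1..<6]))"
  by code_simp

text \<open>The three rotations of \<open>[1, 2, 3]\<close> all describe the cycle \<open>(1 2 3)\<close>.\<close>

lemma triples_5_conjugate_to_123:
  "\<forall>cs\<in>set [cs\<leftarrow>List.n_lists 3 [1..<6]. distinct cs].
     \<exists>g\<in>set (increasing_triples 5). \<exists>h\<in>set (increasing_triples 5).
       map (cycle_of_list g \<circ> cycle_of_list h) cs \<in> {[1,2,3], [2,3,1], [3,1,2]}"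
  by code_simp

lemma increasing_triple_in_alt_group:
  assumes "cs \<in> set (increasing_triples n)"
  shows "cycle_of_list cs \<in> carrier (alt_group n)" and "length cs = 3"
proof -
  have "cycle cs" "length cs = 3" "set cs \<subseteq> {1..n}"
    using assms by (auto simp: increasing_triples_def set_n_lists strict_sorted_iff
        atLeastLessThanSuc_atLeastAtMost simp del: upt_Suc)
  then show "cycle_of_list cs \<in> carrier (alt_group n)" and "length cs = 3"
    using three_cycles_incl by blast+
qed

lemma three_cycles_conjugate_alt_group_5:
  assumes "cycle cs" and "length cs = 3" and "set cs \<subseteq> {1..5}"
  obtains p where "p \<in> carrier (alt_group 5)"
    and "p \<circ> cycle_of_list cs \<circ> inv' p = cycle_of_list [1, 2, 3]"
proof -
  have "cs \<in> set [cs\<leftarrow>List.n_lists 3 [1..<6]. distinct cs]"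
    using assms by (auto simp: set_n_lists)
  then obtain g h where g: "cycle_of_list g \<in> carrier (alt_group 5)"
    and h: "cycle_of_list h \<in> carrier (alt_group 5)"
    and target: "map (cycle_of_list g \<circ> cycle_of_list h) cs \<in> {[1,2,3], [2,3,1], [3,1,2]}"
    using triples_5_conjugate_to_123 increasing_triple_in_alt_group(1) by meson
  define p where "p = cycle_of_list g \<circ> cycle_of_list h"
  have "p \<in> carrier (alt_group 5)"
    using g h alt_group_is_group
    unfolding p_def by (metis alt_group_mult monoid.m_closed group.is_monoid)
  moreover have "p \<circ> cycle_of_list cs \<circ> inv' p = cycle_of_list [1, 2, 3]"
  proof -
    have "bij p"
      using \<open>p \<in> carrier (alt_group 5)\<close> by (metis alt_group_carrier permutes_bij)
    then have "p \<circ> cycle_of_list cs \<circ> inv' p = cycle_of_list (map p cs)"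
      using conjugation_of_cycle[OF assms(1)] by blast
    also have "\<dots> = cycle_of_list [1, 2, 3]"
      using target cycle_of_list3_rotate[of "1::nat" 2 3] cycle_of_list3_rotate[of "2::nat" 3 1]
      unfolding p_def by auto
    finally show ?thesis .
  qed
  ultimately show ?thesis
    using that by blast
qed

lemma normal_alt_group_5_three_cycles_subset:
  assumes N: "N \<lhd> alt_group 5" and "\<sigma> \<in> three_cycles 5" and "\<sigma> \<in> N"
  shows "three_cycles 5 \<subseteq> N"
proof
  obtain cs where "\<sigma> = cycle_of_list cs" "cycle cs" "length cs = 3" "set cs \<subseteq> {1..5}"
    using \<open>\<sigma> \<in> three_cycles 5\<close> by blast
  then obtain q where "q \<in> carrier (alt_group 5)" "q \<circ> \<sigma> \<circ> inv' q = cycle_of_list [1, 2, 3]"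
    using three_cycles_conjugate_alt_group_5 by metis
  then have "cycle_of_list [1, 2, 3] \<in> N"
    using normal_alt_group_conj(1)[OF N \<open>\<sigma> \<in> N\<close>] by metis
  fix \<tau> assume "\<tau> \<in> three_cycles 5"
  then obtain cs where \<tau>: "\<tau> = cycle_of_list cs" "cycle cs" "length cs = 3" "set cs \<subseteq> {1..5}"
    by blast
  then obtain p where p: "p \<in> carrier (alt_group 5)"
    and conj: "p \<circ> \<tau> \<circ> inv' p = cycle_of_list [1, 2, 3]"
    using three_cycles_conjugate_alt_group_5 by blast
  have "\<tau> = inv' p \<circ> (p \<circ> \<tau> \<circ> inv' p) \<circ> p"
    using p unfolding alt_group_carrier by (auto simp: fun_eq_iff permutes_inverses)
  then show "\<tau> \<in> N"
    using normal_alt_group_conj(2)[OF N \<open>cycle_of_list [1, 2, 3] \<in> N\<close> p] conj by simp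
qed

lemma normal_alt_group_5_obtain_three_cycle:
  assumes N: "N \<lhd> alt_group 5" and "x \<in> N" and "x \<noteq> id"
  obtains \<sigma> where "\<sigma> \<in> three_cycles 5" and "\<sigma> \<in> N"
proof -
  have "x permutes {1..5}"
    using assms normal_imp_subgroup subgroup.subset alt_group_carrier by blast
  define xs where "xs = map x [1..<6]"
  have perm_xs: "perm_of_list xs = x"
    using perm_of_list_map[OF \<open>x permutes {1..5}\<close>] by (simp add: xs_def)
  have "xs \<in> set (permutations_of_set_list [1..<6])"
    using map_permutes_in_permutations_of_set_list[OF \<open>x permutes {1..5}\<close>] by (simp add: xs_def)
  moreover have "xs \<noteq> [1..<6]"
    using \<open>x \<noteq> id\<close> perm_of_list_map[OF permutes_id, of 5] perm_xs by auto
  ultimately consider "three_cycle_list xs"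
    | cs where "cs \<in> set (increasing_triples 5)"
      and "three_cycle_list (map (x \<circ> cycle_of_list cs \<circ> x \<circ> cycle_of_list (rev cs)) [1..<6])"
    using permutations_5_three_cycle_witness perm_xs by blast
  then show ?thesis
  proof cases
    case 1
    then show ?thesis
      using that three_cycle_list_imp_three_cycles[OF \<open>x permutes {1..5}\<close>] \<open>x \<in> N\<close>
      by (simp add: xs_def)
  next
    case (2 cs)
    define y where "y = x \<circ> (cycle_of_list cs \<circ> x \<circ> inv' (cycle_of_list cs))"
    have c: "cycle_of_list cs \<in> carrier (alt_group 5)" and "length cs = 3"
      using increasing_triple_in_alt_group[OF 2(1)] by auto
    then have "y \<in> N"
      unfolding y_def using normal_alt_group_conj(1)[OF N \<open>x \<in> N\<close> c] \<open>x \<in> N\<close>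
        subgroup.m_closed[OF normal_imp_subgroup[OF N]] by (simp add: alt_group_mult)
    moreover have "y permutes {1..5}"
      using \<open>y \<in> N\<close> N normal_imp_subgroup subgroup.subset alt_group_carrier by blast
    moreover have "three_cycle_list (map y [1..<Suc 5])"
      using 2 \<open>length cs = 3\<close> by (simp add: y_def inv_cycle_of_list3 o_assoc)
    ultimately show ?thesis
      using that three_cycle_list_imp_three_cycles by blast
  qed
qed

lemma order_alt_group_5: "order (alt_group 5) = 60"
  using alt_group_card_carrier[of 5] by (simp add: order_def fact_numeral)

theorem simple_group_alt_group_5: "simple_group (alt_group 5)"
proof -
  interpret A5: group "alt_group 5"
    by (rule alt_group_is_group)
  have "N = carrier (alt_group 5)" if N: "N \<lhd> alt_group 5" and "N \<noteq> {id}" for N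
  proof -
    have "id \<in> N"
      using N normal_imp_subgroup subgroup.one_closed alt_group_one by metis
    then obtain x where "x \<in> N" "x \<noteq> id"
      using \<open>N \<noteq> {id}\<close> by blast
    then obtain \<sigma> where "\<sigma> \<in> three_cycles 5" "\<sigma> \<in> N"
      using normal_alt_group_5_obtain_three_cycle N by blast
    then have "generate (alt_group 5) (three_cycles 5) \<subseteq> N"
      using A5.generate_subgroup_incl normal_alt_group_5_three_cycles_subset N normal_imp_subgroup by blast
    then show ?thesis
      using alt_group_carrier_as_three_cycles N normal_imp_subgroup subgroup.subset by blast
  qed
  then show ?thesis
    unfolding simple_group_def simple_group_axioms_def
    using alt_group_is_group order_alt_group_5 by (auto simp: alt_group_one)
qed

lemma order_integer_mod_group:
  assumes "n \<noteq> 0"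
  shows "order (integer_mod_group n) = n"
  using assms by (simp add: order_def carrier_integer_mod_group)

lemma psi_normal_divisible_DirProd_integer_mod_group:
  assumes "simple_group S" and "finite (carrier S)"
    and "Factorial_Ring.prime p" and "coprime (order S) p"
  shows "psi_normal_divisible (S \<times>\<times> integer_mod_group p)"
proof (rule psi_normal_divisible_DirProd_coprime)
  have "p \<noteq> 0"
    using assms(3) by auto
  then have order: "order (integer_mod_group p) = p"
    by (rule order_integer_mod_group)
  then show "finite (carrier (integer_mod_group p))"
    using \<open>p \<noteq> 0\<close> by (simp add: carrier_integer_mod_group)
  show "coprime (order S) (order (integer_mod_group p))"
    using assms(4) order by simp
  show "psi_normal_divisible (integer_mod_group p)"
    using group.prime_order_simple[OF group_integer_mod_group] assms(3) order
    by (simp add: simple_group_psi_normal_divisible)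
qed (use assms simple_group_psi_normal_divisible simple_group.axioms(1) in auto)

theorem theorem3p1:
  shows "(\<forall>(S :: ('a, 'b) monoid_scheme) (p :: nat).
            simple_group S \<and> finite (carrier S) \<and> \<not> comm_group S \<and>
            Factorial_Ring.prime p \<and> coprime (order S) p
            \<longrightarrow> psi_normal_divisible (S \<times>\<times> integer_mod_group p))
       \<and> (\<forall>p :: nat. Factorial_Ring.prime p \<and> coprime (60 :: nat) p
            \<longrightarrow> psi_normal_divisible (alt_group 5 \<times>\<times> integer_mod_group p))"
proof (intro conjI allI impI)
  fix S :: "('a, 'b) monoid_scheme" and p :: nat
  assume "simple_group S \<and> finite (carrier S) \<and> \<not> comm_group S \<and>
    Factorial_Ring.prime p \<and> coprime (order S) p"
  then show "psi_normal_divisible (S \<times>\<times> integer_mod_group p)"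
    using psi_normal_divisible_DirProd_integer_mod_group by blast
next
  fix p :: nat
  assume "Factorial_Ring.prime p \<and> coprime (60 :: nat) p"
  moreover have "finite (carrier (alt_group 5))"
    using order_alt_group_5 by (simp add: order_def card_ge_0_finite)
  ultimately show "psi_normal_divisible (alt_group 5 \<times>\<times> integer_mod_group p)"
    using psi_normal_divisible_DirProd_integer_mod_group[OF simple_group_alt_group_5]
      order_alt_group_5 by simp
qed

end
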